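(* Let $V_0$ be a nonlocal vertex algebra such that every $V_0$-module is completely reducible. Regard $V=V_0[[\hbar]]$ as an $\hbar$-adic nonlocal vertex algebra. Then for every simple $V$-module $W$ there is a simple $V_0$-module $W_0$ such that $W\cong W_0[[\hbar]]$ as $V$-modules.
   Context: Let $\hbar$ be a formal variable. A $\mathbb{C}[[\hbar]]$-module is topologically free if it is of the form $W_0[[\hbar]]$ for a complex vector space $W_0$. An ordinary nonlocal vertex algebra $V_0$ (resp. a $V_0$-module $W_0$) makes $V_0[[\hbar]]$ an $\hbar$-adic nonlocal vertex algebra (resp. $W_0[[\hbar]]$ a module over it) by $\mathbb{C}[[\hbar]]$-linear extension. A module over an $\hbar$-adic nonlocal vertex algebra is by definition topologically free. For a $\mathbb{C}[[\hbar]]$-submodule $U$ of a topologically free module $W$, set $[U]=\{w\in W:\hbar^n w\in U\text{ for some }n\ge 1\}$ and let $\overline{U}$ be its $\hbar$-adic closure. Convention: a submodule of a module $W$ over an $\hbar$-adic nonlocal vertex algebra $V$ is a $\mathbb{C}[[\hbar]]$-submodule $W_1$ stable under all operators $u_n$ ($u\in V$) such that $\overline{W_1}=W_1$ and $[W_1]=W_1$; $W$ is simple if $W\ne 0$ and its only submodules are $0$ and $W$. A $V_0$-module is completely reducible if it is a direct sum of simple $V_0$-submodules (equivalently, every submodule has a complementary submodule). *)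

theory Defs
  imports Complex_Main "HOL-Library.Function_Algebras"
begin

(* Vertex operators are given by their modes: Y u n v = u_n v  (n :: int),
   i.e. Y(u,x)v = sum_n u_n v x^(-n-1). *)

definition lin_on :: "(complex \<Rightarrow> 'a::ab_group_add \<Rightarrow> 'a) \<Rightarrow> (complex \<Rightarrow> 'b::ab_group_add \<Rightarrow> 'b)
    \<Rightarrow> 'a set \<Rightarrow> ('a \<Rightarrow> 'b) \<Rightarrow> bool" where
  "lin_on s t A f \<longleftrightarrow> (\<forall>x\<in>A. \<forall>y\<in>A. \<forall>c. f (s c x + y) = t c (f x) + f y)"

(* coefficient of x0^a x2^b in (x0+x2)^l Y_M(u,x0+x2) Y_M(v,x2) w, the sum over j
   truncated at J (terms with j >= J vanish once v_(j-1-b) w = 0) *)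
definition wa_lhs :: "(complex \<Rightarrow> 'm::ab_group_add \<Rightarrow> 'm) \<Rightarrow> ('u \<Rightarrow> int \<Rightarrow> 'm \<Rightarrow> 'm)
    \<Rightarrow> 'u \<Rightarrow> 'u \<Rightarrow> 'm \<Rightarrow> nat \<Rightarrow> int \<Rightarrow> int \<Rightarrow> nat \<Rightarrow> 'm" where
  "wa_lhs sM YM u v w l a b J =
     (\<Sum>j<J. sM ((of_int (a + int j) :: complex) gchoose j)
               (YM u (int l - 1 - a - int j) (YM v (int j - 1 - b) w)))"

(* coefficient of x0^a x2^b in (x0+x2)^l Y_M(Y(u,x0)v,x2) w *)
definition wa_rhs :: "(complex \<Rightarrow> 'm::ab_group_add \<Rightarrow> 'm) \<Rightarrow> ('u \<Rightarrow> int \<Rightarrow> 'u \<Rightarrow> 'u)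
    \<Rightarrow> ('u \<Rightarrow> int \<Rightarrow> 'm \<Rightarrow> 'm) \<Rightarrow> 'u \<Rightarrow> 'u \<Rightarrow> 'm \<Rightarrow> nat \<Rightarrow> int \<Rightarrow> int \<Rightarrow> 'm" where
  "wa_rhs sM Y YM u v w l a b =
     (\<Sum>i\<le>l. sM (of_nat (l choose i))
               (YM (Y u (int l - int i - a - 1) v) (int i - b - 1) w))"

definition wassoc :: "(complex \<Rightarrow> 'm::ab_group_add \<Rightarrow> 'm) \<Rightarrow> ('u \<Rightarrow> int \<Rightarrow> 'u \<Rightarrow> 'u)
    \<Rightarrow> ('u \<Rightarrow> int \<Rightarrow> 'm \<Rightarrow> 'm) \<Rightarrow> 'm set \<Rightarrow> bool" where
  "wassoc sM Y YM M \<longleftrightarrow>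
     (\<forall>u v. \<forall>w\<in>M. \<exists>l::nat. \<forall>a b J.
        (\<forall>j\<ge>J. YM v (int j - 1 - b) w = 0) \<longrightarrow>
        wa_lhs sM YM u v w l a b J = wa_rhs sM Y YM u v w l a b)"

definition nlva :: "(complex \<Rightarrow> 'v::ab_group_add \<Rightarrow> 'v) \<Rightarrow> 'v \<Rightarrow> ('v \<Rightarrow> int \<Rightarrow> 'v \<Rightarrow> 'v) \<Rightarrow> bool" where
  "nlva sc vac Y \<longleftrightarrow>
     vector_space sc \<and>
     (\<forall>u n. lin_on sc sc UNIV (Y u n)) \<and>
     (\<forall>v n. lin_on sc sc UNIV (\<lambda>u. Y u n v)) \<and>
     (\<forall>u v. \<exists>N. \<forall>n\<ge>N. Y u n v = 0) \<and>
     (\<forall>n v. Y vac n v = (if n = -1 then v else 0)) \<and>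
     (\<forall>u. \<forall>n\<ge>0. Y u n vac = 0) \<and>
     (\<forall>u. Y u (-1) vac = u) \<and>
     wassoc sc Y Y UNIV"

definition nlva_module :: "(complex \<Rightarrow> 'v::ab_group_add \<Rightarrow> 'v) \<Rightarrow> 'v \<Rightarrow> ('v \<Rightarrow> int \<Rightarrow> 'v \<Rightarrow> 'v)
    \<Rightarrow> (complex \<Rightarrow> 'm::ab_group_add \<Rightarrow> 'm) \<Rightarrow> 'm set \<Rightarrow> ('v \<Rightarrow> int \<Rightarrow> 'm \<Rightarrow> 'm) \<Rightarrow> bool" where
  "nlva_module sc vac Y sM M YM \<longleftrightarrow>
     vector_space sM \<and> module.subspace sM M \<and>
     (\<forall>u n. \<forall>w\<in>M. YM u n w \<in> M) \<and>
     (\<forall>u n. lin_on sM sM M (YM u n)) \<and>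
     (\<forall>n. \<forall>w\<in>M. lin_on sc sM UNIV (\<lambda>u. YM u n w)) \<and>
     (\<forall>u. \<forall>w\<in>M. \<exists>N. \<forall>n\<ge>N. YM u n w = 0) \<and>
     (\<forall>n. \<forall>w\<in>M. YM vac n w = (if n = -1 then w else 0)) \<and>
     wassoc sM Y YM M"

definition vsubmod :: "(complex \<Rightarrow> 'm::ab_group_add \<Rightarrow> 'm) \<Rightarrow> 'm set \<Rightarrow> ('v \<Rightarrow> int \<Rightarrow> 'm \<Rightarrow> 'm)
    \<Rightarrow> 'm set \<Rightarrow> bool" where
  "vsubmod sM M YM N \<longleftrightarrow> N \<subseteq> M \<and> module.subspace sM N \<and> (\<forall>u n. \<forall>w\<in>N. YM u n w \<in> N)"

definition vsimple :: "(complex \<Rightarrow> 'm::ab_group_add \<Rightarrow> 'm) \<Rightarrow> 'm set \<Rightarrow> ('v \<Rightarrow> int \<Rightarrow> 'm \<Rightarrow> 'm) \<Rightarrow> bool" where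
  "vsimple sM M YM \<longleftrightarrow> M \<noteq> {0} \<and> (\<forall>N. vsubmod sM M YM N \<longrightarrow> N = {0} \<or> N = M)"

definition compl_red :: "(complex \<Rightarrow> 'm::ab_group_add \<Rightarrow> 'm) \<Rightarrow> 'm set \<Rightarrow> ('v \<Rightarrow> int \<Rightarrow> 'm \<Rightarrow> 'm) \<Rightarrow> bool" where
  "compl_red sM M YM \<longleftrightarrow>
     (\<forall>N. vsubmod sM M YM N \<longrightarrow>
        (\<exists>N'. vsubmod sM M YM N' \<and> N \<inter> N' = {0} \<and> (\<forall>w\<in>M. \<exists>x\<in>N. \<exists>y\<in>N'. w = x + y)))"

(* ---------- hbar-adic part: elements of X[[hbar]] are functions nat => X ---------- *)

definition pscale :: "(complex \<Rightarrow> 'a \<Rightarrow> 'a) \<Rightarrow> complex \<Rightarrow> (nat \<Rightarrow> 'a) \<Rightarrow> (nat \<Rightarrow> 'a)" where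
  "pscale s c x = (\<lambda>i. s c (x i))"

definition hmul :: "(complex \<Rightarrow> 'a::comm_monoid_add \<Rightarrow> 'a) \<Rightarrow> (nat \<Rightarrow> complex) \<Rightarrow> (nat \<Rightarrow> 'a) \<Rightarrow> (nat \<Rightarrow> 'a)" where
  "hmul s f x = (\<lambda>k. \<Sum>i\<le>k. s (f i) (x (k - i)))"

definition hlin :: "(complex \<Rightarrow> 'a::ab_group_add \<Rightarrow> 'a) \<Rightarrow> (complex \<Rightarrow> 'b::ab_group_add \<Rightarrow> 'b)
    \<Rightarrow> ((nat \<Rightarrow> 'a) \<Rightarrow> (nat \<Rightarrow> 'b)) \<Rightarrow> bool" where
  "hlin s t F \<longleftrightarrow> (\<forall>f x y. F (hmul s f x + y) = hmul t f (F x) + F y)"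

(* x \<in> hbar^k W *)
definition inhk :: "nat \<Rightarrow> (nat \<Rightarrow> 'a::zero) \<Rightarrow> bool" where
  "inhk k x \<longleftrightarrow> (\<forall>i<k. x i = 0)"

definition hpow :: "nat \<Rightarrow> (nat \<Rightarrow> 'a::zero) \<Rightarrow> (nat \<Rightarrow> 'a)" where
  "hpow n x = (\<lambda>i. if i < n then 0 else x (i - n))"

(* C[[hbar]]-linear extension of vertex operators: V0[[hbar]], W0[[hbar]] *)
definition hY :: "('a \<Rightarrow> int \<Rightarrow> 'c \<Rightarrow> 'd::comm_monoid_add) \<Rightarrow> (nat \<Rightarrow> 'a) \<Rightarrow> int \<Rightarrow> (nat \<Rightarrow> 'c) \<Rightarrow> (nat \<Rightarrow> 'd)" where
  "hY Y u n v = (\<lambda>k. \<Sum>i\<le>k. Y (u i) n (v (k - i)))"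

definition hvac :: "'v::zero \<Rightarrow> (nat \<Rightarrow> 'v)" where
  "hvac vac = (\<lambda>k. if k = 0 then vac else 0)"

(* module W = B[[hbar]] (topologically free) over the hbar-adic nonlocal vertex
   algebra V = V0[[hbar]] *)
definition hmodule :: "(complex \<Rightarrow> 'v::ab_group_add \<Rightarrow> 'v) \<Rightarrow> 'v \<Rightarrow> ('v \<Rightarrow> int \<Rightarrow> 'v \<Rightarrow> 'v)
    \<Rightarrow> (complex \<Rightarrow> 'b::ab_group_add \<Rightarrow> 'b)
    \<Rightarrow> ((nat \<Rightarrow> 'v) \<Rightarrow> int \<Rightarrow> (nat \<Rightarrow> 'b) \<Rightarrow> (nat \<Rightarrow> 'b)) \<Rightarrow> bool" where
  "hmodule sc vac Y sB YW \<longleftrightarrow>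
     vector_space sB \<and>
     (\<forall>u n. hlin sB sB (YW u n)) \<and>
     (\<forall>n w. hlin sc sB (\<lambda>u. YW u n w)) \<and>
     (\<forall>u w k. \<exists>N. \<forall>n\<ge>N. inhk k (YW u n w)) \<and>
     (\<forall>n w. YW (hvac vac) n w = (if n = -1 then w else 0)) \<and>
     (\<forall>u v w k. \<exists>l::nat. \<forall>a b J.
        (\<forall>j\<ge>J. inhk k (YW v (int j - 1 - b) w)) \<longrightarrow>
        inhk k (wa_lhs (pscale sB) YW u v w l a b J - wa_rhs (pscale sB) (hY Y) YW u v w l a b))"

definition hclosed :: "(nat \<Rightarrow> 'b::ab_group_add) set \<Rightarrow> bool" where
  "hclosed N \<longleftrightarrow> (\<forall>x. (\<forall>k. \<exists>y\<in>N. inhk k (x - y)) \<longrightarrow> x \<in> N)"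

definition hsat :: "(nat \<Rightarrow> 'b::zero) set \<Rightarrow> bool" where
  "hsat N \<longleftrightarrow> (\<forall>x n. n \<ge> 1 \<and> hpow n x \<in> N \<longrightarrow> x \<in> N)"

definition hsubmod :: "(complex \<Rightarrow> 'b::ab_group_add \<Rightarrow> 'b)
    \<Rightarrow> ((nat \<Rightarrow> 'v) \<Rightarrow> int \<Rightarrow> (nat \<Rightarrow> 'b) \<Rightarrow> (nat \<Rightarrow> 'b)) \<Rightarrow> (nat \<Rightarrow> 'b) set \<Rightarrow> bool" where
  "hsubmod sB YW N \<longleftrightarrow>
     0 \<in> N \<and> (\<forall>x\<in>N. \<forall>y\<in>N. x + y \<in> N) \<and> (\<forall>f. \<forall>x\<in>N. hmul sB f x \<in> N) \<and>
     (\<forall>u n. \<forall>x\<in>N. YW u n x \<in> N) \<and> hclosed N \<and> hsat N"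

definition hsimple :: "(complex \<Rightarrow> 'b::ab_group_add \<Rightarrow> 'b)
    \<Rightarrow> ((nat \<Rightarrow> 'v) \<Rightarrow> int \<Rightarrow> (nat \<Rightarrow> 'b) \<Rightarrow> (nat \<Rightarrow> 'b)) \<Rightarrow> bool" where
  "hsimple sB YW \<longleftrightarrow> (UNIV :: (nat \<Rightarrow> 'b) set) \<noteq> {0} \<and>
     (\<forall>N. hsubmod sB YW N \<longrightarrow> N = {0} \<or> N = UNIV)"

definition hiso :: "(complex \<Rightarrow> 'b::ab_group_add \<Rightarrow> 'b)
    \<Rightarrow> ((nat \<Rightarrow> 'v) \<Rightarrow> int \<Rightarrow> (nat \<Rightarrow> 'b) \<Rightarrow> (nat \<Rightarrow> 'b))
    \<Rightarrow> ((nat \<Rightarrow> 'v) \<Rightarrow> int \<Rightarrow> (nat \<Rightarrow> 'b) \<Rightarrow> (nat \<Rightarrow> 'b))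
    \<Rightarrow> ((nat \<Rightarrow> 'b) \<Rightarrow> (nat \<Rightarrow> 'b)) \<Rightarrow> bool" where
  "hiso sB YW YW' \<phi> \<longleftrightarrow> bij \<phi> \<and> hlin sB sB \<phi> \<and> (\<forall>u n w. \<phi> (YW u n w) = YW' u n (\<phi> w))"

end

(* Reducing modulo hbar^k makes W/hbar^k W a module over V0, with W0 = W/hbar W.  Complete
   reducibility lets one lift the identity of W0 step by step to compatible V0-module maps
   W0 -> W/hbar^k W, in each step by choosing a complement of hbar^k W/hbar^(k+1) W; in the limit
   this gives a V0-module section s : W0 -> W of the reduction.  Its C[[hbar]]-linear extension
   W0[[hbar]] -> W is unitriangular for the hbar-adic filtration, hence bijective, and it
   intertwines the vertex operators because both sides are hbar-adically continuous and agree
   on constants.  Finally, a submodule N of W0 yields the submodule N[[hbar]] of W0[[hbar]], so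
   simplicity passes from W to W0. *)

theory Submission
  imports Defs
begin

lemma lin_on_UNIV_additive:
  assumes "vector_space s" "vector_space t" "lin_on s t UNIV f"
  shows "additive f"
proof
  interpret s: vector_space s by fact
  interpret t: vector_space t by fact
  fix x y show "f (x + y) = f x + f y"
    using assms(3) unfolding lin_on_def by (metis UNIV_I s.scale_one t.scale_one)
qed

lemma lin_on_UNIV_scale:
  assumes "vector_space s" "vector_space t" "lin_on s t UNIV f"
  shows "f (s c x) = t c (f x)"
  using assms(3) additive.zero[OF lin_on_UNIV_additive[OF assms]]
  unfolding lin_on_def by (metis UNIV_I add.right_neutral)

lemma pscale_vector_space: "vector_space s \<Longrightarrow> vector_space (pscale s)"
  unfolding vector_space_def pscale_def by (simp add: fun_eq_iff)

lemma hvac_add: "hvac (a + b) = hvac a + hvac b" for a b :: "'a::monoid_add"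
  by (rule ext) (simp add: hvac_def)

lemma hvac_scale:
  assumes "vector_space s" shows "hvac (s c a) = pscale s c (hvac a)"
proof -
  interpret vector_space s by fact
  show ?thesis by (rule ext) (simp add: hvac_def pscale_def)
qed

lemma hvac_simps [simp]: "hvac a 0 = a" "hvac a (Suc i) = 0"
  by (simp_all add: hvac_def)

lemma hvac_zero [simp]: "hvac 0 = 0"
  by (simp add: hvac_def fun_eq_iff)

lemma hvac_eq_0_iff [simp]: "hvac a = 0 \<longleftrightarrow> a = 0"
  by (auto simp: hvac_def fun_eq_iff)

lemma hpow_Suc0_simps [simp]: "hpow (Suc 0) x 0 = 0" "hpow (Suc 0) x (Suc i) = x i"
  by (simp_all add: hpow_def)

lemma hpow_Suc: "hpow (Suc n) x = hpow (Suc 0) (hpow n x)"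
  by (rule ext) (auto simp: hpow_def)

lemma hseries_decomp: "x = hvac (x 0) + hpow (Suc 0) (\<lambda>i. x (Suc i))"
  for x :: "nat \<Rightarrow> 'a::monoid_add"
  by (rule ext) (auto simp: hvac_def hpow_def gr0_conv_Suc)

definition hadditive :: "((nat \<Rightarrow> 'a::ab_group_add) \<Rightarrow> (nat \<Rightarrow> 'b::ab_group_add)) \<Rightarrow> bool" where
  "hadditive F \<longleftrightarrow> additive F \<and> (\<forall>x. F (hpow (Suc 0) x) = hpow (Suc 0) (F x))"

lemma hadditive_comp: "hadditive F \<Longrightarrow> hadditive G \<Longrightarrow> hadditive (\<lambda>x. F (G x))"
  unfolding hadditive_def additive_def by simp

lemma hadditive_hpow:
  assumes "hadditive F" shows "F (hpow n x) = hpow n (F x)"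
proof (induction n)
  case 0
  then show ?case by (simp add: hpow_def)
next
  case (Suc n)
  then show ?case using assms by (simp add: hadditive_def hpow_Suc[of n])
qed

lemma hadditive_causal:
  assumes F: "hadditive F" and xy: "\<And>i. i \<le> k \<Longrightarrow> x i = y i"
  shows "F x k = F y k"
proof -
  have add: "additive F" using F by (simp add: hadditive_def)
  define z where "z i = x (i + Suc k) - y (i + Suc k)" for i
  have "x - y = hpow (Suc k) z"
    by (rule ext) (auto simp: hpow_def xy z_def)
  then have "F x - F y = hpow (Suc k) (F z)"
    by (simp add: additive.diff[OF add, symmetric] hadditive_hpow[OF F])
  then have "(F x - F y) k = 0"
    by (simp add: hpow_def)
  then show ?thesis by simp
qed

lemma hadditive_decomp:
  "hadditive F \<Longrightarrow> F x = F (hvac (x 0)) + hpow (Suc 0) (F (\<lambda>i. x (Suc i)))"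
  using arg_cong[where f=F, OF hseries_decomp[of x]] by (simp add: hadditive_def additive.add)

lemma hadditive_eqI:
  assumes F: "hadditive F" and G: "hadditive G" and const: "\<And>a. F (hvac a) = G (hvac a)"
  shows "F = G"
proof (intro ext)
  fix x k show "F x k = G x k"
  proof (induction k arbitrary: x)
    case 0
    show ?case
      by (subst hadditive_decomp[OF F], subst hadditive_decomp[OF G]) (simp add: const hpow_def)
  next
    case (Suc k)
    then show ?case
      by (subst hadditive_decomp[OF F], subst hadditive_decomp[OF G]) (simp add: const hpow_def)
  qed
qed

lemma hadditive2_eqI:
  fixes F G :: "(nat \<Rightarrow> 'a::ab_group_add) \<Rightarrow> (nat \<Rightarrow> 'b::ab_group_add) \<Rightarrow> nat \<Rightarrow> 'c::ab_group_add"
  assumes "\<And>y. hadditive (\<lambda>x. F x y)" "\<And>x. hadditive (F x)"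
    and "\<And>y. hadditive (\<lambda>x. G x y)" "\<And>x. hadditive (G x)"
    and const: "\<And>a b. F (hvac a) (hvac b) = G (hvac a) (hvac b)"
  shows "F = G"
proof -
  have "F (hvac a) = G (hvac a)" for a
    by (rule hadditive_eqI) (use assms const in auto)
  then have "(\<lambda>x. F x y) = (\<lambda>x. G x y)" for y
    by (intro hadditive_eqI) (use assms in auto)
  then show ?thesis by (metis ext)
qed

definition hconv :: "('a \<Rightarrow> 'b \<Rightarrow> 'c::comm_monoid_add) \<Rightarrow> (nat \<Rightarrow> 'a) \<Rightarrow> (nat \<Rightarrow> 'b) \<Rightarrow> nat \<Rightarrow> 'c" where
  "hconv B x y = (\<lambda>k. \<Sum>i\<le>k. B (x i) (y (k - i)))"

lemma hmul_hconv: "hmul s = hconv s"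
  by (simp add: hmul_def hconv_def fun_eq_iff)

lemma hY_hconv: "hY Y u n = hconv (\<lambda>a. Y a n) u"
  by (simp add: hY_def hconv_def fun_eq_iff)

lemma hconv_hvac_left:
  assumes "\<And>b. additive (\<lambda>a. B a b)"
  shows "hconv B (hvac a) y = (\<lambda>k. B a (y k))"
  by (rule ext) (simp add: hconv_def sum.atMost_shift additive.zero[OF assms])

lemma hconv_hvac:
  assumes "\<And>b. additive (\<lambda>a. B a b)" "\<And>a. additive (B a)"
  shows "hconv B (hvac a) (hvac b) = hvac (B a b)"
  unfolding hconv_hvac_left[OF assms(1)]
  by (rule ext) (simp add: hvac_def additive.zero[OF assms(2)])

lemma hadditive_hconv_left:
  assumes "\<And>b. additive (\<lambda>a. B a b)"
  shows "hadditive (\<lambda>x. hconv B x y)"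
  unfolding hadditive_def
proof (intro conjI allI)
  show "additive (\<lambda>x. hconv B x y)"
    by standard (simp add: hconv_def fun_eq_iff sum.distrib additive.add[OF assms])
  fix x show "hconv B (hpow (Suc 0) x) y = hpow (Suc 0) (hconv B x y)"
  proof (rule ext)
    fix k show "hconv B (hpow (Suc 0) x) y k = hpow (Suc 0) (hconv B x y) k"
    proof (cases k)
      case (Suc m)
      show ?thesis unfolding Suc hconv_def
        by (simp only: sum.atMost_Suc_shift) (simp add: additive.zero[OF assms])
    qed (simp add: hconv_def additive.zero[OF assms])
  qed
qed

lemma hadditive_hconv_right:
  assumes "\<And>a. additive (B a)"
  shows "hadditive (hconv B x)"
  unfolding hadditive_def
proof (intro conjI allI)
  show "additive (hconv B x)"
    by standard (simp add: hconv_def fun_eq_iff sum.distrib additive.add[OF assms])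
  fix y show "hconv B x (hpow (Suc 0) y) = hpow (Suc 0) (hconv B x y)"
  proof (rule ext)
    fix k show "hconv B x (hpow (Suc 0) y) k = hpow (Suc 0) (hconv B x y) k"
    proof (cases k)
      case (Suc m)
      have "(\<Sum>i\<le>Suc m. B (x i) (hpow (Suc 0) y (Suc m - i))) = (\<Sum>i\<le>m. B (x i) (y (m - i)))"
        by (simp add: additive.zero[OF assms] Suc_diff_le)
      then show ?thesis using Suc by (simp add: hconv_def)
    qed (simp add: hconv_def additive.zero[OF assms])
  qed
qed

lemma vector_space_additive:
  assumes "vector_space s" shows "additive (s c)" "additive (\<lambda>c. s c x)"
proof -
  interpret vector_space s by fact
  show "additive (s c)" "additive (\<lambda>c. s c x)"
    by standard (simp_all add: scale_right_distrib scale_left_distrib)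
qed

lemma hmul_hadditive_left: "vector_space s \<Longrightarrow> hadditive (\<lambda>f. hmul s f x)"
  unfolding hmul_hconv by (rule hadditive_hconv_left) (rule vector_space_additive)

lemma hmul_hadditive_right: "vector_space s \<Longrightarrow> hadditive (hmul s f)"
  unfolding hmul_hconv by (rule hadditive_hconv_right) (rule vector_space_additive)

lemma hmul_hvac: "vector_space s \<Longrightarrow> hmul s (hvac c) x = pscale s c x"
  by (simp add: hmul_hconv hconv_hvac_left vector_space_additive pscale_def)

lemma hmul_hvac_one: "vector_space s \<Longrightarrow> hmul s (hvac 1) x = x"
  by (simp add: hmul_hvac pscale_def vector_space.vector_space_assms(4))

lemma hmul_hbar: "vector_space s \<Longrightarrow> hmul s (hpow (Suc 0) (hvac 1)) x = hpow (Suc 0) x"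
  using hmul_hadditive_left[of s x] by (simp add: hadditive_def hmul_hvac_one)

lemma hlin_hadditive:
  assumes s: "vector_space s" and t: "vector_space t" and F: "hlin s t F"
  shows "hadditive F"
proof -
  have add: "additive F"
    by standard (metis F hlin_def hmul_hvac_one s t)
  then show ?thesis
    using F additive.zero[OF add] unfolding hadditive_def hlin_def
    by (metis add.right_neutral hmul_hbar s t)
qed

lemma hlin_hmul:
  assumes "vector_space s" "vector_space t" "hlin s t F"
  shows "F (hmul s f x) = hmul t f (F x)"
  using assms(3) additive.zero[of F] hlin_hadditive[OF assms] unfolding hlin_def hadditive_def
  by (metis add.right_neutral)

lemma hlin_scale:
  assumes "vector_space s" "vector_space t" "hlin s t F"
  shows "F (pscale s c x) = pscale t c (F x)"
  using hlin_hmul[OF assms, of "hvac c" x] by (simp add: hmul_hvac assms)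

lemma hadditive_inhk:
  assumes F: "hadditive F" and z: "inhk k z" shows "inhk k (F z)"
  unfolding inhk_def
proof (intro allI impI)
  fix i assume "i < k"
  then have "F z i = F 0 i"
    by (intro hadditive_causal[OF F]) (use z in \<open>auto simp: inhk_def\<close>)
  then show "F z i = 0" using F by (simp add: hadditive_def additive.zero)
qed

lemma hiso_inv:
  assumes \<psi>: "bij \<psi>" "hlin sB sB \<psi>" and intertw: "\<And>u n c. \<psi> (YW' u n c) = YW u n (\<psi> c)"
  shows "hiso sB YW YW' (inv \<psi>)"
  unfolding hiso_def
proof (intro conjI allI)
  have inv_eq: "inv \<psi> w = c \<longleftrightarrow> w = \<psi> c" for w c
    using \<psi>(1) by (metis bij_inv_eq_iff)
  have \<psi>_inv: "\<psi> (inv \<psi> w) = w" for w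
    using \<psi>(1) by (simp add: bij_is_surj surj_f_inv_f)
  show "bij (inv \<psi>)" using \<psi>(1) by (rule bij_imp_bij_inv)
  show "hlin sB sB (inv \<psi>)"
    using \<psi>(2) unfolding hlin_def by (simp add: inv_eq \<psi>_inv)
  show "inv \<psi> (YW u n w) = YW' u n (inv \<psi> w)" for u n w
    by (simp add: inv_eq intertw \<psi>_inv)
qed

lemma hsubmod_vimage_hiso:
  fixes sB :: "complex \<Rightarrow> 'b::ab_group_add \<Rightarrow> 'b"
  assumes B: "vector_space sB" and \<phi>: "hiso sB YW YW' \<phi>" and S': "hsubmod sB YW' S'"
  shows "hsubmod sB YW (\<phi> -` S')"
proof -
  have zero: "0 \<in> S'" and add: "\<And>x y. x \<in> S' \<Longrightarrow> y \<in> S' \<Longrightarrow> x + y \<in> S'"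
    and hmul: "\<And>f x. x \<in> S' \<Longrightarrow> hmul sB f x \<in> S'"
    and act: "\<And>u n x. x \<in> S' \<Longrightarrow> YW' u n x \<in> S'"
    and closed: "\<And>x. (\<And>k. \<exists>y\<in>S'. inhk k (x - y)) \<Longrightarrow> x \<in> S'"
    and sat: "\<And>x n. 1 \<le> n \<Longrightarrow> hpow n x \<in> S' \<Longrightarrow> x \<in> S'"
    using S' unfolding hsubmod_def hclosed_def hsat_def by blast+
  have lin: "hlin sB sB \<phi>" and intertw: "\<And>u n w. \<phi> (YW u n w) = YW' u n (\<phi> w)"
    using \<phi> unfolding hiso_def by blast+
  have hadd: "hadditive \<phi>" by (rule hlin_hadditive[OF B B lin])
  then have additive: "additive \<phi>" by (simp add: hadditive_def)
  show ?thesis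
    unfolding hsubmod_def hclosed_def hsat_def
  proof (intro conjI allI ballI impI)
    show "0 \<in> \<phi> -` S'" using zero by (simp add: additive.zero[OF additive])
    show "x + y \<in> \<phi> -` S'" if "x \<in> \<phi> -` S'" "y \<in> \<phi> -` S'" for x y
      using that add by (simp add: additive.add[OF additive])
    show "hmul sB f x \<in> \<phi> -` S'" if "x \<in> \<phi> -` S'" for f x
      using that hmul by (simp add: hlin_hmul[OF B B lin])
    show "YW u n x \<in> \<phi> -` S'" if "x \<in> \<phi> -` S'" for u n x
      using that act by (simp add: intertw)
    show "x \<in> \<phi> -` S'" if approx: "\<forall>k. \<exists>y\<in>\<phi> -` S'. inhk k (x - y)" for x
    proof -
      have "\<exists>y\<in>S'. inhk k (\<phi> x - y)" for k
      proof -
        obtain y where "\<phi> y \<in> S'" "inhk k (x - y)" using approx by auto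
        then show ?thesis
          using hadditive_inhk[OF hadd] additive.diff[OF additive] by metis
      qed
      then show ?thesis using closed by blast
    qed
    show "x \<in> \<phi> -` S'" if "1 \<le> n \<and> hpow n x \<in> \<phi> -` S'" for x n
      using that sat[of n "\<phi> x"] by (simp add: hadditive_hpow[OF hadd])
  qed
qed

lemma hsimple_hiso:
  fixes sB :: "complex \<Rightarrow> 'b::ab_group_add \<Rightarrow> 'b"
  assumes B: "vector_space sB" and \<phi>: "hiso sB YW YW' \<phi>" and simple: "hsimple sB YW"
  shows "hsimple sB YW'"
  unfolding hsimple_def
proof (intro conjI allI impI)
  show "(UNIV :: (nat \<Rightarrow> 'b) set) \<noteq> {0}" using simple by (simp add: hsimple_def)
  fix S' assume "hsubmod sB YW' S'"
  then have "\<phi> -` S' = {0} \<or> \<phi> -` S' = UNIV"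
    using simple hsubmod_vimage_hiso[OF B \<phi>] by (simp add: hsimple_def)
  moreover have surj: "surj \<phi>" and "\<phi> 0 = 0"
    using \<phi> hlin_hadditive[OF B B] additive.zero
    by (auto simp: hiso_def hadditive_def bij_is_surj)
  moreover have "S' = \<phi> ` (\<phi> -` S')" using surj by (simp add: surj_image_vimage_eq)
  ultimately show "S' = {0} \<or> S' = UNIV" by (elim disjE) simp_all
qed

lemma hsubmod_hseries:
  fixes sB :: "complex \<Rightarrow> 'b::ab_group_add \<Rightarrow> 'b"
  assumes B: "vector_space sB" and "vsubmod sB UNIV Y0 N"
  shows "hsubmod sB (hY Y0) {c. \<forall>i. c i \<in> N}"
proof -
  interpret B: vector_space sB by fact
  have N: "B.subspace N" and Y0_N: "\<And>u n w. w \<in> N \<Longrightarrow> Y0 u n w \<in> N"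
    using assms(2) by (auto simp: vsubmod_def)
  define S :: "(nat \<Rightarrow> 'b) set" where "S = {c. \<forall>i. c i \<in> N}"
  have "hsubmod sB (hY Y0) S"
    unfolding hsubmod_def hclosed_def hsat_def
  proof (intro conjI allI ballI impI)
    show "0 \<in> S" using N B.subspace_0 by (simp add: S_def)
    show "x + y \<in> S" if "x \<in> S" "y \<in> S" for x y
      using that N B.subspace_add by (simp add: S_def)
    show "hmul sB f x \<in> S" if "x \<in> S" for f x
      using that N by (auto simp: S_def hmul_def intro!: B.subspace_sum B.subspace_scale)
    show "hY Y0 u n x \<in> S" if "x \<in> S" for u n x
      using that N by (auto simp: S_def hY_def intro!: B.subspace_sum Y0_N)
    show "x \<in> S" if approx: "\<forall>k. \<exists>y\<in>S. inhk k (x - y)" for x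
    proof -
      have "x i \<in> N" for i
      proof -
        obtain y where "y \<in> S" "inhk (Suc i) (x - y)" using approx by blast
        then show "x i \<in> N" by (auto simp: S_def inhk_def)
      qed
      then show ?thesis by (simp add: S_def)
    qed
    show "x \<in> S" if "1 \<le> n \<and> hpow n x \<in> S" for x n
    proof -
      have "hpow n x (i + n) \<in> N" for i using that by (simp add: S_def)
      then show ?thesis by (simp add: S_def hpow_def)
    qed
  qed
  then show ?thesis by (simp add: S_def)
qed

lemma vsimple_if_hsimple_hY:
  fixes sB :: "complex \<Rightarrow> 'b::ab_group_add \<Rightarrow> 'b"
  assumes B: "vector_space sB" and simple: "hsimple sB (hY Y0)"
  shows "vsimple sB UNIV Y0"
  unfolding vsimple_def
proof (intro conjI allI impI)
  obtain x :: "nat \<Rightarrow> 'b" where "x \<noteq> 0" using simple by (auto simp: hsimple_def)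
  then show "(UNIV :: 'b set) \<noteq> {0}" by (auto simp: fun_eq_iff)
  fix N assume N: "vsubmod sB UNIV Y0 N"
  then have "0 \<in> N"
    using module.subspace_0[OF B[folded module_iff_vector_space]] by (simp add: vsubmod_def)
  define S :: "(nat \<Rightarrow> 'b) set" where "S = {c. \<forall>i. c i \<in> N}"
  have hvac_in: "hvac b \<in> S \<longleftrightarrow> b \<in> N" for b
    using \<open>0 \<in> N\<close> by (auto simp: S_def hvac_def)
  have "S = {0} \<or> S = UNIV"
    using simple hsubmod_hseries[OF B N] by (simp add: hsimple_def S_def)
  then show "N = {0} \<or> N = UNIV"
  proof (elim disjE)
    assume "S = {0}"
    then have "N \<subseteq> {0}" using hvac_in by auto
    then show ?thesis using \<open>0 \<in> N\<close> by blast
  qed (use hvac_in in blast)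
qed

lemma nlva_module_vsubmod:
  assumes "nlva_module sc vac Y sM M YM" "vsubmod sM M YM N"
  shows "nlva_module sc vac Y sM N YM"
  using assms unfolding nlva_module_def vsubmod_def wassoc_def lin_on_def
  by (meson subsetD)

lemma wassoc_pullback:
  assumes assoc: "wassoc sM Y YM M" and \<iota>: "inj \<iota>" "range \<iota> \<subseteq> M" "additive \<iota>"
    and scale: "\<And>c x. \<iota> (sN c x) = sM c (\<iota> x)"
    and intertw: "\<And>u n w. YM u n (\<iota> w) = \<iota> (YN u n w)"
  shows "wassoc sN Y YN UNIV"
  unfolding wassoc_def
proof (intro allI ballI)
  have \<iota>_0: "\<iota> x = 0 \<longleftrightarrow> x = 0" for x
    using \<iota>(1) additive.zero[OF \<iota>(3)] by (metis injD)
  have \<iota>_sum: "\<iota> (\<Sum>i\<in>A. sN (c i) (f i)) = (\<Sum>i\<in>A. sM (c i) (\<iota> (f i)))"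
    for A :: "nat set" and c f
    by (simp add: additive.sum[OF \<iota>(3)] scale)
  fix u v w
  obtain l where l: "\<And>a b J. (\<forall>j\<ge>J. YM v (int j - 1 - b) (\<iota> w) = 0) \<Longrightarrow>
      wa_lhs sM YM u v (\<iota> w) l a b J = wa_rhs sM Y YM u v (\<iota> w) l a b"
    using assoc \<iota>(2) unfolding wassoc_def by blast
  have "wa_lhs sN YN u v w l a b J = wa_rhs sN Y YN u v w l a b"
    if "\<forall>j\<ge>J. YN v (int j - 1 - b) w = 0" for a b J
  proof -
    have "\<iota> (wa_lhs sN YN u v w l a b J) = \<iota> (wa_rhs sN Y YN u v w l a b)"
      using l[of J b a] that by (simp add: wa_lhs_def wa_rhs_def intertw \<iota>_0 \<iota>_sum)
    then show ?thesis using \<iota>(1) by (simp add: inj_eq)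
  qed
  then show "\<exists>l. \<forall>a b J. (\<forall>j\<ge>J. YN v (int j - 1 - b) w = 0) \<longrightarrow>
      wa_lhs sN YN u v w l a b J = wa_rhs sN Y YN u v w l a b" by blast
qed

lemma nlva_module_pullback:
  assumes M: "nlva_module sc vac Y sM M YM" and N: "vector_space sN"
    and \<iota>: "lin_on sN sM UNIV \<iota>" "inj \<iota>" "range \<iota> \<subseteq> M"
    and intertw: "\<And>u n w. YM u n (\<iota> w) = \<iota> (YN u n w)"
  shows "nlva_module sc vac Y sN UNIV YN"
proof -
  interpret N: vector_space sN by fact
  have sM: "vector_space sM" using M by (simp add: nlva_module_def)
  have add: "additive \<iota>" by (rule lin_on_UNIV_additive[OF N sM \<iota>(1)])
  have \<iota>_eq_iff: "\<iota> x = \<iota> y \<longleftrightarrow> x = y" for x y using \<iota>(2) by (simp add: inj_eq)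
  have \<iota>_0: "\<iota> x = 0 \<longleftrightarrow> x = 0" for x
    using \<iota>_eq_iff[of x 0] by (simp add: additive.zero[OF add])
  have \<iota>_lin: "\<iota> (sN c x + y) = sM c (\<iota> x) + \<iota> y" for c x y
    using \<iota>(1) by (simp add: lin_on_def)
  have \<iota>M: "\<iota> w \<in> M" for w using \<iota>(3) by blast
  have linM: "lin_on sM sM M (YM u n)" and linuM: "w \<in> M \<Longrightarrow> lin_on sc sM UNIV (\<lambda>u. YM u n w)"
    and truncM: "w \<in> M \<Longrightarrow> \<exists>N. \<forall>n\<ge>N. YM u n w = 0"
    and vacM: "w \<in> M \<Longrightarrow> YM vac n w = (if n = -1 then w else 0)"
    and assocM: "wassoc sM Y YM M" for u n w
    using M unfolding nlva_module_def by blast+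
  show ?thesis
    unfolding nlva_module_def
  proof (intro conjI allI ballI N.subspace_UNIV)
    show "vector_space sN" by fact
    show "YN u n w \<in> UNIV" for u n w by simp
    show "lin_on sN sN UNIV (YN u n)" for u n
      using linM[of u n] \<iota>M unfolding lin_on_def
      by (metis \<iota>_lin intertw \<iota>_eq_iff)
    show "lin_on sc sN UNIV (\<lambda>u. YN u n w)" for n w
      using linuM[OF \<iota>M, of n] unfolding lin_on_def
      by (metis UNIV_I \<iota>_lin intertw \<iota>_eq_iff)
    show "\<exists>N. \<forall>n\<ge>N. YN u n w = 0" for u w
      using truncM[OF \<iota>M, of u] by (simp add: intertw \<iota>_0)
    show "YN vac n w = (if n = -1 then w else 0)" for n w
      using vacM[OF \<iota>M, of n w] by (cases "n = -1") (simp_all add: intertw \<iota>_eq_iff \<iota>_0)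
    show "wassoc sN Y YN UNIV"
      using assocM \<iota>(2,3) add lin_on_UNIV_scale[OF N sM \<iota>(1)] intertw by (rule wassoc_pullback)
  qed
qed

lemma compl_red_complement:
  assumes "module sM" "compl_red sM M YM" "vsubmod sM M YM K"
  obtains C where "vsubmod sM M YM C" "\<And>w. w \<in> M \<Longrightarrow> \<exists>!y. y \<in> C \<and> w - y \<in> K"
proof -
  interpret module sM by fact
  obtain C where C: "vsubmod sM M YM C" and KC: "K \<inter> C = {0}"
    and dec: "\<forall>w\<in>M. \<exists>x\<in>K. \<exists>y\<in>C. w = x + y"
    using assms(2)[unfolded compl_red_def, rule_format, OF assms(3)] by (elim exE conjE)
  have K: "subspace K" and Csub: "subspace C" using assms(3) C by (simp_all add: vsubmod_def)
  have "\<exists>!y. y \<in> C \<and> w - y \<in> K" if w: "w \<in> M" for w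
  proof (rule ex_ex1I)
    obtain x y where "x \<in> K" "y \<in> C" "w = x + y" using dec w by blast
    then have "y \<in> C \<and> w - y \<in> K" by simp
    then show "\<exists>y. y \<in> C \<and> w - y \<in> K" ..
  next
    fix y y' assume y: "y \<in> C \<and> w - y \<in> K" and y': "y' \<in> C \<and> w - y' \<in> K"
    have "y' - y \<in> K" using subspace_diff[OF K, of "w - y" "w - y'"] y y' by simp
    moreover have "y' - y \<in> C" using subspace_diff[OF Csub] y y' by blast
    ultimately have "y' - y \<in> K \<inter> C" by blast
    then have "y' - y = 0" using KC by simp
    then show "y = y'" by simp
  qed
  then show thesis using C that by blast
qed

definition htrunc :: "nat \<Rightarrow> (nat \<Rightarrow> 'a::zero) \<Rightarrow> nat \<Rightarrow> 'a" where
  "htrunc k x = (\<lambda>i. if i < k then x i else 0)"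

definition htrunc_space :: "nat \<Rightarrow> (nat \<Rightarrow> 'a::zero) set" where
  "htrunc_space k = {x. \<forall>i\<ge>k. x i = 0}"

lemma htrunc_zero [simp]: "htrunc k 0 = 0"
  by (simp add: htrunc_def fun_eq_iff)

lemma htrunc_additive: "additive (htrunc k)"
  by standard (simp add: htrunc_def fun_eq_iff)

lemma htrunc_pscale: "vector_space s \<Longrightarrow> htrunc k (pscale s c x) = pscale s c (htrunc k x)"
  by (rule ext) (simp add: htrunc_def pscale_def module.scale_zero_right module_iff_vector_space)

lemma htrunc_in_space: "htrunc k x \<in> htrunc_space k"
  by (simp add: htrunc_def htrunc_space_def)

lemma htrunc_id: "x \<in> htrunc_space k \<Longrightarrow> htrunc k x = x"
  by (rule ext) (simp add: htrunc_def htrunc_space_def)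

lemma htrunc_htrunc: "j \<le> k \<Longrightarrow> htrunc j (htrunc k x) = htrunc j x"
  by (rule ext) (simp add: htrunc_def)

lemma inhk_iff_htrunc: "inhk k x \<longleftrightarrow> htrunc k x = 0"
  by (auto simp: inhk_def htrunc_def fun_eq_iff)

lemma htrunc_hadditive: "hadditive F \<Longrightarrow> htrunc k (F (htrunc k x)) = htrunc k (F x)"
  by (rule ext) (auto simp: htrunc_def intro: hadditive_causal)

lemma htrunc_limit:
  assumes "\<And>n. x n \<in> htrunc_space (Suc n)" "\<And>n. htrunc (Suc n) (x (Suc n)) = x n"
  shows "htrunc (Suc n) (\<lambda>i. x i i) = x n"
proof -
  have stable: "x m i = x i i" if "i \<le> m" for i m
    using that
  proof (induction m)
    case (Suc m)
    show ?case
    proof (cases "i = Suc m")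
      case False
      then have "x (Suc m) i = htrunc (Suc m) (x (Suc m)) i" using Suc by (simp add: htrunc_def)
      also have "\<dots> = x m i" using assms(2)[of m] by simp
      finally show ?thesis using Suc False by simp
    qed simp
  qed simp
  show ?thesis
  proof (rule ext)
    fix i show "htrunc (Suc n) (\<lambda>i. x i i) i = x n i"
      using assms(1)[of n] stable[of i n] by (simp add: htrunc_def htrunc_space_def)
  qed
qed

lemma hadditive_bij:
  assumes F: "hadditive F" and diag: "\<And>a. F (hvac a) 0 = a"
  shows "bij F"
  unfolding bij_def
proof
  have add: "additive F" using F by (simp add: hadditive_def)
  have F_0: "F z 0 = z 0" for z
    using hadditive_decomp[OF F, of z] diag by (metis add.right_neutral hpow_Suc0_simps(1) plus_fun_apply)
  have "z k = 0" if "F z = 0" for z k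
    using that
  proof (induction k arbitrary: z)
    case 0
    then show ?case using F_0[of z] by simp
  next
    case (Suc k)
    then have "z 0 = 0" using F_0[of z] by simp
    then have "F z = hpow (Suc 0) (F (\<lambda>i. z (Suc i)))"
      using hadditive_decomp[OF F, of z] by (simp add: additive.zero[OF add])
    then have "hpow (Suc 0) (F (\<lambda>i. z (Suc i))) = 0"
      using Suc.prems by metis
    then have "F (\<lambda>i. z (Suc i)) = 0"
      by (metis hpow_Suc0_simps(2) zero_fun_def ext)
    then show ?case using Suc.IH by blast
  qed
  then show "inj F"
    by (intro injI) (metis additive.diff[OF add] eq_iff_diff_eq_0 ext)
next
  define step :: "(nat \<Rightarrow> 'a) \<Rightarrow> nat \<Rightarrow> 'a" where "step w = (\<lambda>i. (w - F (hvac (w 0))) (Suc i))" for w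
  define solve where "solve w = (\<lambda>n. (step ^^ n) w 0)" for w
  have solve_eq: "solve w = hvac (w 0) + hpow (Suc 0) (solve (step w))" for w
    by (rule ext) (auto simp: solve_def hvac_def hpow_def funpow_swap1 gr0_conv_Suc)
  have F_solve: "F (solve w) = F (hvac (w 0)) + hpow (Suc 0) (F (solve (step w)))" for w
    using F by (subst solve_eq) (simp add: hadditive_def additive.add)
  have "F (solve w) k = w k" for w k
  proof (induction k arbitrary: w)
    case 0
    show ?case unfolding F_solve[of w] by (simp add: diag)
  next
    case (Suc k)
    show ?case unfolding F_solve[of w] using Suc.IH[of "step w"] by (simp add: step_def)
  qed
  then show "surj F" by (metis ext surjI)
qed

locale hmodule_reduction =
  fixes sc :: "complex \<Rightarrow> 'v::ab_group_add \<Rightarrow> 'v" and vac :: 'v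
    and Y :: "'v \<Rightarrow> int \<Rightarrow> 'v \<Rightarrow> 'v"
    and sB :: "complex \<Rightarrow> 'b::ab_group_add \<Rightarrow> 'b"
    and YW :: "(nat \<Rightarrow> 'v) \<Rightarrow> int \<Rightarrow> (nat \<Rightarrow> 'b) \<Rightarrow> (nat \<Rightarrow> 'b)"
  assumes V0: "nlva sc vac Y" and W: "hmodule sc vac Y sB YW"
begin

lemma V_vector_space: "vector_space sc" using V0 by (simp add: nlva_def)
lemma B_vector_space: "vector_space sB" using W by (simp add: hmodule_def)
lemma P_vector_space: "vector_space (pscale sB)" by (rule pscale_vector_space[OF B_vector_space])

lemma YW_hlin_right: "hlin sB sB (YW u n)" using W by (simp add: hmodule_def)
lemma YW_hlin_left: "hlin sc sB (\<lambda>u. YW u n w)" using W by (simp add: hmodule_def)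

lemma YW_hadditive_right: "hadditive (YW u n)"
  by (rule hlin_hadditive[OF B_vector_space B_vector_space YW_hlin_right])

lemma YW_hadditive_left: "hadditive (\<lambda>u. YW u n w)"
  by (rule hlin_hadditive[OF V_vector_space B_vector_space YW_hlin_left])

lemma YW_add_left: "YW (u + u') n w = YW u n w + YW u' n w"
  using YW_hadditive_left[of n w] by (simp add: hadditive_def additive_def)

lemma YW_add_right: "YW u n (w + w') = YW u n w + YW u n w'"
  using YW_hadditive_right[of u n] by (simp add: hadditive_def additive.add)

lemma YW_lin_on_hvac_left: "lin_on sc (pscale sB) UNIV (\<lambda>u. YW (hvac u) n w)"
  using hlin_scale[OF V_vector_space B_vector_space YW_hlin_left]
  by (simp add: lin_on_def hvac_add hvac_scale[OF V_vector_space] YW_add_left)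

lemma YW_lin_on_right: "lin_on (pscale sB) (pscale sB) A (YW u n)"
  using hlin_scale[OF B_vector_space B_vector_space YW_hlin_right]
  by (simp add: lin_on_def YW_add_right)

(* htrunc_space k with the action YW_trunc k models W/hbar^k W as a V0-module, V0 acting
   through the constant series. *)
definition YW_trunc :: "nat \<Rightarrow> 'v \<Rightarrow> int \<Rightarrow> (nat \<Rightarrow> 'b) \<Rightarrow> nat \<Rightarrow> 'b" where
  "YW_trunc k u n x = htrunc k (YW (hvac u) n x)"

definition Y0 :: "'v \<Rightarrow> int \<Rightarrow> 'b \<Rightarrow> 'b" where
  "Y0 u n b = YW (hvac u) n (hvac b) 0"

lemma htrunc_YW_trunc: "j \<le> k \<Longrightarrow> htrunc j (YW_trunc k u n x) = YW_trunc j u n (htrunc j x)"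
  by (simp add: YW_trunc_def htrunc_htrunc htrunc_hadditive[OF YW_hadditive_right])

lemma YW_trunc_hvac: "YW_trunc (Suc 0) u n (hvac b) = hvac (Y0 u n b)"
  by (rule ext) (simp add: YW_trunc_def htrunc_def hvac_def Y0_def)

lemma htrunc_space_subspace: "module.subspace (pscale sB) (htrunc_space k)"
proof -
  interpret P: vector_space "pscale sB" by (rule P_vector_space)
  show ?thesis
    unfolding P.subspace_def htrunc_space_def
    by (simp add: pscale_def module.scale_zero_right module_iff_vector_space B_vector_space)
qed

lemma YW_trunc_module: "nlva_module sc vac Y (pscale sB) (htrunc_space k) (YW_trunc k)"
  unfolding nlva_module_def
proof (intro conjI allI ballI P_vector_space htrunc_space_subspace)
  have htrunc_lin: "htrunc k (pscale sB c x + y) = pscale sB c (htrunc k x) + htrunc k y" for c x y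
    by (simp add: additive.add[OF htrunc_additive] htrunc_pscale[OF B_vector_space])
  show "YW_trunc k u n w \<in> htrunc_space k" for u n w
    by (simp add: YW_trunc_def htrunc_in_space)
  show "lin_on (pscale sB) (pscale sB) (htrunc_space k) (YW_trunc k u n)" for u n
    using YW_lin_on_right[of _ "hvac u" n] by (simp add: lin_on_def YW_trunc_def htrunc_lin)
  show "lin_on sc (pscale sB) UNIV (\<lambda>u. YW_trunc k u n w)" for n w
    using YW_lin_on_hvac_left[of n w] by (simp add: lin_on_def YW_trunc_def htrunc_lin)
  show "\<exists>N. \<forall>n\<ge>N. YW_trunc k u n w = 0" for u w
    using W unfolding hmodule_def by (simp add: YW_trunc_def inhk_iff_htrunc)
  show "YW_trunc k vac n w = (if n = -1 then w else 0)" if "w \<in> htrunc_space k" for n w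
    using W that unfolding hmodule_def by (simp add: YW_trunc_def htrunc_id)
  show "wassoc (pscale sB) Y (YW_trunc k) (htrunc_space k)"
    unfolding wassoc_def
  proof (intro allI ballI)
    fix u v :: 'v and w :: "nat \<Rightarrow> 'b"
    obtain l where l: "\<And>a b J. (\<forall>j\<ge>J. inhk k (YW (hvac v) (int j - 1 - b) w)) \<Longrightarrow>
        inhk k (wa_lhs (pscale sB) YW (hvac u) (hvac v) w l a b J
               - wa_rhs (pscale sB) (hY Y) YW (hvac u) (hvac v) w l a b)"
      using W unfolding hmodule_def by blast
    have hY_hvac: "hY Y (hvac u') i (hvac v') = hvac (Y u' i v')" for u' i v'
      using V0 unfolding hY_hconv nlva_def
      by (intro hconv_hvac) (auto intro: lin_on_UNIV_additive[OF V_vector_space V_vector_space])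
    have "wa_lhs (pscale sB) (YW_trunc k) u v w l a b J = wa_rhs (pscale sB) Y (YW_trunc k) u v w l a b"
      if "\<forall>j\<ge>J. YW_trunc k v (int j - 1 - b) w = 0" for a b J
    proof -
      have "htrunc k (wa_lhs (pscale sB) YW (hvac u) (hvac v) w l a b J)
          = htrunc k (wa_rhs (pscale sB) (hY Y) YW (hvac u) (hvac v) w l a b)"
        using l[of J b a] that
        by (simp add: YW_trunc_def inhk_iff_htrunc additive.diff[OF htrunc_additive])
      then show ?thesis
        by (simp add: wa_lhs_def wa_rhs_def YW_trunc_def hY_hvac additive.sum[OF htrunc_additive]
            htrunc_pscale[OF B_vector_space] htrunc_hadditive[OF YW_hadditive_right])
    qed
    then show "\<exists>l. \<forall>a b J. (\<forall>j\<ge>J. YW_trunc k v (int j - 1 - b) w = 0) \<longrightarrow>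
        wa_lhs (pscale sB) (YW_trunc k) u v w l a b J = wa_rhs (pscale sB) Y (YW_trunc k) u v w l a b"
      by blast
  qed
qed

lemma Y0_module: "nlva_module sc vac Y sB UNIV Y0"
proof (rule nlva_module_pullback[OF YW_trunc_module B_vector_space])
  show "lin_on sB (pscale sB) UNIV hvac"
    by (simp add: lin_on_def hvac_add hvac_scale[OF B_vector_space])
  show "inj hvac" by (rule injI) (metis hvac_simps(1))
  show "range hvac \<subseteq> htrunc_space (Suc 0)" by (auto simp: htrunc_space_def hvac_def)
  show "YW_trunc (Suc 0) u n (hvac w) = hvac (Y0 u n w)" for u n w by (rule YW_trunc_hvac)
qed

lemma Y0_additive_right: "additive (Y0 u n)"
  using Y0_module lin_on_UNIV_additive[OF B_vector_space B_vector_space]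
  by (simp add: nlva_module_def)

lemma Y0_additive_left: "additive (\<lambda>u. Y0 u n b)"
  using Y0_module lin_on_UNIV_additive[OF V_vector_space B_vector_space]
  by (simp add: nlva_module_def)

(* A V0-module map W0 -> W/hbar^k W lifting the identity of W0 = W/hbar W. *)
definition trunc_section :: "nat \<Rightarrow> ('b \<Rightarrow> nat \<Rightarrow> 'b) \<Rightarrow> bool" where
  "trunc_section k g \<longleftrightarrow> (\<forall>b. g b \<in> htrunc_space k) \<and> (\<forall>b. g b 0 = b) \<and>
     lin_on sB (pscale sB) UNIV g \<and> (\<forall>u n b. YW_trunc k u n (g b) = g (Y0 u n b))"

lemma trunc_section_hvac: "trunc_section (Suc 0) hvac"
  unfolding trunc_section_def
proof (intro conjI allI)
  show "hvac b \<in> htrunc_space (Suc 0)" for b :: 'b by (simp add: htrunc_space_def hvac_def)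
  show "lin_on sB (pscale sB) UNIV hvac"
    by (simp add: lin_on_def hvac_add hvac_scale[OF B_vector_space])
  show "YW_trunc (Suc 0) u n (hvac b) = hvac (Y0 u n b)" for u n b by (rule YW_trunc_hvac)
qed simp

lemma vsubmod_trunc_range:
  assumes g: "trunc_section k g"
  shows "vsubmod (pscale sB) (htrunc_space k) (YW_trunc k) (range g)"
  unfolding vsubmod_def module.subspace_def[OF P_vector_space[unfolded module_iff_vector_space[symmetric]]]
proof (intro conjI ballI allI)
  have lin: "lin_on sB (pscale sB) UNIV g" using g by (simp add: trunc_section_def)
  have add: "additive g" by (rule lin_on_UNIV_additive[OF B_vector_space P_vector_space lin])
  show "range g \<subseteq> htrunc_space k" using g by (auto simp: trunc_section_def)
  show "0 \<in> range g" using additive.zero[OF add] by (metis rangeI)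
  show "x + y \<in> range g" if "x \<in> range g" "y \<in> range g" for x y
    using that by (auto simp flip: additive.add[OF add])
  show "pscale sB c x \<in> range g" if "x \<in> range g" for c x
    using that by (auto simp flip: lin_on_UNIV_scale[OF B_vector_space P_vector_space lin])
  show "YW_trunc k u n x \<in> range g" if "x \<in> range g" for u n x
    using that g by (auto simp: trunc_section_def)
qed

lemma vsubmod_trunc_zero: "vsubmod (pscale sB) (htrunc_space k) (YW_trunc k) {0}"
proof -
  interpret P: vector_space "pscale sB" by (rule P_vector_space)
  have "YW u n 0 = 0" for u n
    using YW_hadditive_right[of u n] by (simp add: hadditive_def additive.zero)
  then show ?thesis
    using P.subspace_0[OF htrunc_space_subspace]
    by (simp add: vsubmod_def P.subspace_def YW_trunc_def)
qed

lemma vsubmod_htrunc_vimage: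
  assumes N: "vsubmod (pscale sB) (htrunc_space k) (YW_trunc k) N"
  shows "vsubmod (pscale sB) (htrunc_space (Suc k)) (YW_trunc (Suc k))
           {x \<in> htrunc_space (Suc k). htrunc k x \<in> N}"
proof -
  interpret P: vector_space "pscale sB" by (rule P_vector_space)
  have Nsub: "P.subspace N" and Nclosed: "\<And>u n x. x \<in> N \<Longrightarrow> YW_trunc k u n x \<in> N"
    using N by (simp_all add: vsubmod_def)
  have space: "P.subspace (htrunc_space (Suc k))" by (rule htrunc_space_subspace)
  have "htrunc k (YW_trunc (Suc k) u n x) \<in> N" if "htrunc k x \<in> N" for u n x
    using Nclosed[OF that] by (simp add: htrunc_YW_trunc)
  then show ?thesis
    unfolding vsubmod_def P.subspace_def
    using P.subspace_0[OF Nsub] P.subspace_add[OF Nsub] P.subspace_scale[OF Nsub]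
      P.subspace_0[OF space] P.subspace_add[OF space] P.subspace_scale[OF space]
    by (auto simp: additive.add[OF htrunc_additive] htrunc_pscale[OF B_vector_space]
        YW_trunc_def htrunc_in_space)
qed
(* The kernel K = hbar^k W/hbar^(k+1) W of the truncation has a complement C in the preimage D of
   g(W0), and C contains exactly one element over each g b. *)
lemma trunc_section_complement:
  assumes cr: "\<forall>(M :: (nat \<Rightarrow> 'b) set) YM. nlva_module sc vac Y (pscale sB) M YM
               \<longrightarrow> compl_red (pscale sB) M YM"
    and g: "trunc_section k g"
  obtains C where "vsubmod (pscale sB) (htrunc_space (Suc k)) (YW_trunc (Suc k)) C"
    and "\<And>b. \<exists>!y. y \<in> C \<and> htrunc k y = g b"
proof -
  interpret P: vector_space "pscale sB" by (rule P_vector_space)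
  have g_space: "\<And>b. g b \<in> htrunc_space k" and g_lin: "lin_on sB (pscale sB) UNIV g"
    using g by (simp_all add: trunc_section_def)
  define D where "D = {x \<in> htrunc_space (Suc k). htrunc k x \<in> range g}"
  define K :: "(nat \<Rightarrow> 'b) set" where "K = {x \<in> htrunc_space (Suc k). htrunc k x \<in> {0}}"
  have D: "vsubmod (pscale sB) (htrunc_space (Suc k)) (YW_trunc (Suc k)) D"
    unfolding D_def by (rule vsubmod_htrunc_vimage[OF vsubmod_trunc_range[OF g]])
  have "vsubmod (pscale sB) (htrunc_space (Suc k)) (YW_trunc (Suc k)) K"
    unfolding K_def by (rule vsubmod_htrunc_vimage[OF vsubmod_trunc_zero])
  moreover have "K \<subseteq> D"
    unfolding K_def D_def using additive.zero[OF lin_on_UNIV_additive[OF B_vector_space P_vector_space g_lin]]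
    by (auto intro: range_eqI)
  ultimately have K: "vsubmod (pscale sB) D (YW_trunc (Suc k)) K"
    by (simp add: vsubmod_def)
  have "compl_red (pscale sB) D (YW_trunc (Suc k))"
    using cr nlva_module_vsubmod[OF YW_trunc_module D] by blast
  then obtain C where C: "vsubmod (pscale sB) D (YW_trunc (Suc k)) C"
    and unique: "\<And>w. w \<in> D \<Longrightarrow> \<exists>!y. y \<in> C \<and> w - y \<in> K"
    using compl_red_complement[OF P.module_axioms _ K] by blast
  have C_D: "C \<subseteq> D" using C by (simp add: vsubmod_def)
  have g_D: "g b \<in> D" for b
    using g_space[of b] by (auto simp: D_def htrunc_space_def htrunc_id)
  have in_K: "g b - y \<in> K \<longleftrightarrow> htrunc k y = g b" if "y \<in> C" for b y
    using that C_D g_D[of b] P.subspace_diff[OF htrunc_space_subspace]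
    by (auto simp: K_def D_def additive.diff[OF htrunc_additive] htrunc_id g_space)
  have "vsubmod (pscale sB) (htrunc_space (Suc k)) (YW_trunc (Suc k)) C"
    using C D by (auto simp: vsubmod_def)
  moreover have "\<exists>!y. y \<in> C \<and> htrunc k y = g b" for b
    using unique[OF g_D[of b]] in_K by blast
  ultimately show thesis by (rule that)
qed

lemma trunc_section_lift:
  assumes cr: "\<forall>(M :: (nat \<Rightarrow> 'b) set) YM. nlva_module sc vac Y (pscale sB) M YM
               \<longrightarrow> compl_red (pscale sB) M YM"
    and g: "trunc_section k g" and k: "1 \<le> k"
  shows "\<exists>g'. trunc_section (Suc k) g' \<and> (\<forall>b. htrunc k (g' b) = g b)"
proof -
  interpret P: vector_space "pscale sB" by (rule P_vector_space)
  have g_0: "\<And>b. g b 0 = b" and g_lin: "lin_on sB (pscale sB) UNIV g"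
    and g_Y: "\<And>u n b. YW_trunc k u n (g b) = g (Y0 u n b)"
    using g by (simp_all add: trunc_section_def)
  obtain C where C: "vsubmod (pscale sB) (htrunc_space (Suc k)) (YW_trunc (Suc k)) C"
    and lift_ex1: "\<And>b. \<exists>!y. y \<in> C \<and> htrunc k y = g b"
    using trunc_section_complement[OF cr g] by blast
  have C_space: "C \<subseteq> htrunc_space (Suc k)" and C_sub: "P.subspace C"
    and C_closed: "\<And>u n x. x \<in> C \<Longrightarrow> YW_trunc (Suc k) u n x \<in> C"
    using C by (simp_all add: vsubmod_def)
  define lift where "lift b = (THE y. y \<in> C \<and> htrunc k y = g b)" for b
  have lift: "lift b \<in> C" "htrunc k (lift b) = g b" for b
    using theI'[OF lift_ex1[of b]] by (simp_all add: lift_def)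
  have lift_eqI: "lift b = y" if "y \<in> C" "htrunc k y = g b" for b y
    using lift_ex1[of b] lift[of b] that by blast
  have "trunc_section (Suc k) lift"
    unfolding trunc_section_def
  proof (intro conjI allI)
    show "lift b \<in> htrunc_space (Suc k)" for b using lift(1) C_space by blast
    show "lift b 0 = b" for b
      using lift(2)[of b] g_0[of b] k by (metis htrunc_def less_le_trans zero_less_one)
    show "lin_on sB (pscale sB) UNIV lift"
      unfolding lin_on_def
    proof (intro ballI allI)
      fix x y c
      show "lift (sB c x + y) = pscale sB c (lift x) + lift y"
        using g_lin lift[of x] lift[of y] P.subspace_add[OF C_sub] P.subspace_scale[OF C_sub]
        by (intro lift_eqI) (auto simp: lin_on_def additive.add[OF htrunc_additive]
            htrunc_pscale[OF B_vector_space])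
    qed
    show "YW_trunc (Suc k) u n (lift b) = lift (Y0 u n b)" for u n b
      using C_closed lift[of b] k by (intro lift_eqI[symmetric]) (auto simp: htrunc_YW_trunc g_Y)
  qed
  then show ?thesis using lift(2) by blast
qed

lemma module_section_exists:
  assumes cr: "\<forall>(M :: (nat \<Rightarrow> 'b) set) YM. nlva_module sc vac Y (pscale sB) M YM
               \<longrightarrow> compl_red (pscale sB) M YM"
  shows "\<exists>s. (\<forall>b. s b 0 = b) \<and> lin_on sB (pscale sB) UNIV s \<and>
           (\<forall>u n b. YW (hvac u) n (s b) = s (Y0 u n b))"
proof -
  obtain f where f: "\<And>n. trunc_section (Suc n) (f n)"
    and compat: "\<And>n b. htrunc (Suc n) (f (Suc n) b) = f n b"
    using dependent_nat_choice[of "\<lambda>n g. trunc_section (Suc n) g"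
        "\<lambda>n g g'. \<forall>b. htrunc (Suc n) (g' b) = g b"]
      trunc_section_hvac trunc_section_lift[OF cr] by fastforce
  define s where "s b = (\<lambda>i. f i b i)" for b
  have s_trunc: "htrunc (Suc n) (s b) = f n b" for n b
    unfolding s_def by (rule htrunc_limit) (use f compat in \<open>auto simp: trunc_section_def\<close>)
  have "s b 0 = b" for b using f[of 0] by (simp add: s_def trunc_section_def)
  moreover have "lin_on sB (pscale sB) UNIV s"
    using f by (auto simp: lin_on_def trunc_section_def s_def fun_eq_iff pscale_def)
  moreover have "YW (hvac u) n (s b) = s (Y0 u n b)" for u n b
  proof (rule ext)
    fix i
    have "YW (hvac u) n (s b) i = YW_trunc (Suc i) u n (htrunc (Suc i) (s b)) i"
      by (simp add: YW_trunc_def htrunc_hadditive[OF YW_hadditive_right]) (simp add: htrunc_def)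
    also have "\<dots> = f i (Y0 u n b) i"
      using f[of i] by (simp add: s_trunc trunc_section_def)
    finally show "YW (hvac u) n (s b) i = s (Y0 u n b) i" by (simp add: s_def)
  qed
  ultimately show ?thesis by blast
qed

end

locale hmodule_section = hmodule_reduction +
  fixes s :: "'b \<Rightarrow> nat \<Rightarrow> 'b"
  assumes s_0: "s b 0 = b" and s_lin: "lin_on sB (pscale sB) UNIV s"
    and s_Y: "YW (hvac u) n (s b) = s (Y0 u n b)"
begin

definition hext :: "(nat \<Rightarrow> 'b) \<Rightarrow> nat \<Rightarrow> 'b" where
  "hext c = (\<lambda>k. \<Sum>j\<le>k. s (c j) (k - j))"

lemma s_additive: "additive s"
  by (rule lin_on_UNIV_additive[OF B_vector_space P_vector_space s_lin])

lemma hext_hadditive: "hadditive hext"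
  unfolding hadditive_def
proof (intro conjI allI)
  show "additive hext"
    by standard (simp add: hext_def fun_eq_iff additive.add[OF s_additive] sum.distrib)
  fix c show "hext (hpow (Suc 0) c) = hpow (Suc 0) (hext c)"
  proof (rule ext)
    fix k show "hext (hpow (Suc 0) c) k = hpow (Suc 0) (hext c) k"
    proof (cases k)
      case (Suc m)
      show ?thesis unfolding Suc hext_def
        by (simp only: sum.atMost_Suc_shift) (simp add: additive.zero[OF s_additive])
    qed (simp add: hext_def additive.zero[OF s_additive])
  qed
qed

lemma hext_hvac: "hext (hvac b) = s b"
  by (rule ext) (simp add: hext_def sum.atMost_shift additive.zero[OF s_additive])

lemma hext_hmul: "hext (hmul sB f x) = hmul sB f (hext x)"
proof -
  have "(\<lambda>f x. hext (hmul sB f x)) = (\<lambda>f x. hmul sB f (hext x))"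
  proof (rule hadditive2_eqI)
    show "hadditive (\<lambda>f. hext (hmul sB f x))" for x
      by (rule hadditive_comp[OF hext_hadditive hmul_hadditive_left[OF B_vector_space]])
    show "hadditive (\<lambda>x. hext (hmul sB f x))" for f
      by (rule hadditive_comp[OF hext_hadditive hmul_hadditive_right[OF B_vector_space]])
    show "hadditive (\<lambda>f. hmul sB f (hext x))" for x
      by (rule hmul_hadditive_left[OF B_vector_space])
    show "hadditive (\<lambda>x. hmul sB f (hext x))" for f
      by (rule hadditive_comp[OF hmul_hadditive_right[OF B_vector_space] hext_hadditive])
    show "hext (hmul sB (hvac c) (hvac b)) = hmul sB (hvac c) (hext (hvac b))" for c b
      using lin_on_UNIV_scale[OF B_vector_space P_vector_space s_lin]
      by (simp add: hmul_hvac[OF B_vector_space] hvac_scale[OF B_vector_space, symmetric] hext_hvac)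
  qed
  then show ?thesis by (simp add: fun_eq_iff)
qed

lemma hext_hlin: "hlin sB sB hext"
  using hext_hadditive by (simp add: hlin_def hext_hmul hadditive_def additive.add)

lemma hext_hY: "hext (hY Y0 u n c) = YW u n (hext c)"
proof -
  have "(\<lambda>u c. hext (hY Y0 u n c)) = (\<lambda>u c. YW u n (hext c))"
  proof (rule hadditive2_eqI)
    show "hadditive (\<lambda>u. hext (hY Y0 u n c))" for c
      unfolding hY_hconv
      by (rule hadditive_comp[OF hext_hadditive hadditive_hconv_left[OF Y0_additive_left]])
    show "hadditive (\<lambda>c. hext (hY Y0 u n c))" for u
      unfolding hY_hconv
      by (rule hadditive_comp[OF hext_hadditive hadditive_hconv_right[OF Y0_additive_right]])
    show "hadditive (\<lambda>u. YW u n (hext c))" for c by (rule YW_hadditive_left)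
    show "hadditive (\<lambda>c. YW u n (hext c))" for u
      by (rule hadditive_comp[OF YW_hadditive_right hext_hadditive])
    show "hext (hY Y0 (hvac a) n (hvac b)) = YW (hvac a) n (hext (hvac b))" for a b
      by (simp add: hY_hconv hconv_hvac Y0_additive_left Y0_additive_right hext_hvac s_Y)
  qed
  then show ?thesis by (simp add: fun_eq_iff)
qed

lemma hext_bij: "bij hext"
  by (rule hadditive_bij[OF hext_hadditive]) (simp add: hext_hvac s_0)

lemma hiso_inv_hext: "hiso sB YW (hY Y0) (inv hext)"
  using hext_bij hext_hlin by (rule hiso_inv) (rule hext_hY)

end

theorem lemma3p5:
  fixes sc :: "complex \<Rightarrow> 'v::ab_group_add \<Rightarrow> 'v" and vac :: 'v
    and Y :: "'v \<Rightarrow> int \<Rightarrow> 'v \<Rightarrow> 'v"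
    and sB :: "complex \<Rightarrow> 'b::ab_group_add \<Rightarrow> 'b"
    and YW :: "(nat \<Rightarrow> 'v) \<Rightarrow> int \<Rightarrow> (nat \<Rightarrow> 'b) \<Rightarrow> (nat \<Rightarrow> 'b)"
  assumes V0: "nlva sc vac Y"
    and cr: "\<forall>(M :: (nat \<Rightarrow> 'b) set) YM. nlva_module sc vac Y (pscale sB) M YM
               \<longrightarrow> compl_red (pscale sB) M YM"
    and W: "hmodule sc vac Y sB YW"
    and simple: "hsimple sB YW"
  shows "\<exists>Y0 :: 'v \<Rightarrow> int \<Rightarrow> 'b \<Rightarrow> 'b.
           nlva_module sc vac Y sB UNIV Y0 \<and> vsimple sB UNIV Y0 \<and>
           (\<exists>\<phi>. hiso sB YW (hY Y0) \<phi>)"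
proof -
  interpret hmodule_reduction sc vac Y sB YW
    using V0 W by unfold_locales
  obtain s where "hmodule_section sc vac Y sB YW s"
    using module_section_exists[OF cr] by (auto simp: hmodule_section_def hmodule_section_axioms_def
        hmodule_reduction_axioms)
  then interpret hmodule_section sc vac Y sB YW s .
  have "hsimple sB (hY Y0)"
    by (rule hsimple_hiso[OF B_vector_space hiso_inv_hext simple])
  then have "vsimple sB UNIV Y0"
    by (rule vsimple_if_hsimple_hY[OF B_vector_space])
  then show ?thesis
    using Y0_module hiso_inv_hext by blast
qed

end
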